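(* Let $A=[a_{ij}]$ be an $n\times n$ row-stochastic matrix with positive diagonal entries, and assume the smallest positive entry of $A$ is at least $\eta>0$. Let $w_{ij}$ be the $(i,j)$-th entry of $A^TA$. Let $(S^-,S^+)$ be a partition of $N=\{1,\dots,n\}$ into two disjoint sets. If $\sum_{i\in S^-,\,j\in S^+}w_{ij}>0$, then \[\sum_{i\in S^-,\,j\in S^+}w_{ij}\ge\frac\eta2.\]
   Context: A matrix is row-stochastic if it is nonnegative and each row sums to $1$. *)

theory Defs
  imports "HOL-Analysis.Analysis"
begin

definition row_stochastic :: "real ^ 'n ^ 'n \<Rightarrow> bool" where
  "row_stochastic A \<longleftrightarrow> (\<forall>i j. 0 \<le> A $ i $ j) \<and> (\<forall>i. (\<Sum>j\<in>UNIV. A $ i $ j) = 1)"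

end

theory Submission
  imports Defs
begin

text \<open>The cross sum of \<open>A\<^sup>T A\<close> decomposes over the rows \<open>k\<close> of \<open>A\<close> as
  \<open>\<Sum>\<^sub>k r\<^sub>k (1 - r\<^sub>k)\<close>, where \<open>r\<^sub>k\<close> is the mass row \<open>k\<close> puts on \<open>S\<^sup>-\<close>.
  If the cross sum is positive, some row has positive mass on both sides; each of these masses
  contains a positive entry and so is at least \<open>\<eta>\<close>, and \<open>\<eta> \<le> r \<le> 1 - \<eta>\<close> forces
  \<open>r (1 - r) \<ge> \<eta> (1 - \<eta>) \<ge> \<eta>/2\<close>.\<close>

lemma sum_sum_transpose_matrix_mult:
  fixes A :: "'a::comm_semiring_1 ^ 'm ^ 'n"
  shows "(\<Sum>i\<in>S. \<Sum>j\<in>T. (transpose A ** A) $ i $ j)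
       = (\<Sum>k\<in>UNIV. (\<Sum>i\<in>S. A $ k $ i) * (\<Sum>j\<in>T. A $ k $ j))"
proof -
  have "(\<Sum>i\<in>S. \<Sum>j\<in>T. (transpose A ** A) $ i $ j)
      = (\<Sum>i\<in>S. \<Sum>j\<in>T. \<Sum>k\<in>UNIV. A $ k $ i * A $ k $ j)"
    by (simp add: matrix_matrix_mult_def transpose_def)
  also have "\<dots> = (\<Sum>k\<in>UNIV. \<Sum>i\<in>S. \<Sum>j\<in>T. A $ k $ i * A $ k $ j)"
    by (subst sum.swap, rule sum.cong, simp, subst sum.swap, simp)
  also have "\<dots> = (\<Sum>k\<in>UNIV. (\<Sum>i\<in>S. A $ k $ i) * (\<Sum>j\<in>T. A $ k $ j))"
    by (simp add: sum_product)
  finally show ?thesis .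
qed

lemma row_stochastic_nonneg: "row_stochastic A \<Longrightarrow> 0 \<le> A $ i $ j"
  by (simp add: row_stochastic_def)

lemma row_stochastic_sum_compl:
  assumes "row_stochastic A" and "S \<union> T = UNIV" and "S \<inter> T = {}"
  shows "(\<Sum>j\<in>T. A $ k $ j) = 1 - (\<Sum>j\<in>S. A $ k $ j)"
proof -
  have "(\<Sum>j\<in>S. A $ k $ j) + (\<Sum>j\<in>T. A $ k $ j) = (\<Sum>j\<in>UNIV. A $ k $ j)"
    using assms(2,3) sum.union_disjoint[of S T "\<lambda>j. A $ k $ j"] by simp
  also have "\<dots> = 1"
    using assms(1) by (simp add: row_stochastic_def)
  finally show ?thesis by simp
qed

lemma sum_ge_min_positive:
  fixes f :: "'a \<Rightarrow> real"
  assumes "\<And>x. x \<in> S \<Longrightarrow> 0 \<le> f x"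
    and "\<And>x. x \<in> S \<Longrightarrow> 0 < f x \<Longrightarrow> \<eta> \<le> f x"
    and "sum f S \<noteq> 0"
  shows "\<eta> \<le> sum f S"
proof -
  obtain x where x: "x \<in> S" "f x \<noteq> 0"
    using sum.not_neutral_contains_not_neutral[OF assms(3)] by blast
  then have "0 < f x"
    using assms(1) by (simp add: order_less_le)
  with assms(2) x(1) have "\<eta> \<le> f x"
    by blast
  also have "\<dots> \<le> sum f S"
  proof (rule member_le_sum)
    show "finite S"
      using assms(3) by (meson sum.infinite)
  qed (use assms(1) x(1) in auto)
  finally show ?thesis .
qed

lemma mult_one_minus_ge_half:
  fixes r \<eta> :: real
  assumes "0 < \<eta>" and "\<eta> \<le> r" and "\<eta> \<le> 1 - r"
  shows "\<eta> / 2 \<le> r * (1 - r)"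
proof -
  have "0 \<le> (r - \<eta>) * (1 - r - \<eta>)"
    using assms by (intro mult_nonneg_nonneg) auto
  then have "\<eta> - \<eta> * \<eta> \<le> r * (1 - r)"
    by (simp add: algebra_simps)
  moreover have "\<eta> * \<eta> \<le> \<eta> * (1 / 2)"
    using assms by (intro mult_left_mono) auto
  ultimately show ?thesis
    by linarith
qed

theorem lemma2:
  fixes A :: "real ^ 'n ^ 'n" and \<eta> :: real and Sm Sp :: "'n set"
  assumes "row_stochastic A"
    and "\<forall>i. A $ i $ i > 0"
    and "\<eta> > 0"
    and "\<forall>i j. A $ i $ j > 0 \<longrightarrow> A $ i $ j \<ge> \<eta>"
    and "Sm \<union> Sp = UNIV" and "Sm \<inter> Sp = {}"
    and "(\<Sum>i\<in>Sm. \<Sum>j\<in>Sp. (transpose A ** A) $ i $ j) > 0"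
  shows "(\<Sum>i\<in>Sm. \<Sum>j\<in>Sp. (transpose A ** A) $ i $ j) \<ge> \<eta> / 2"
proof -
  define r where "r k = (\<Sum>i\<in>Sm. A $ k $ i)" for k
  have compl: "(\<Sum>j\<in>Sp. A $ k $ j) = 1 - r k" for k
    unfolding r_def using assms(1,5,6) by (rule row_stochastic_sum_compl)
  have cross: "(\<Sum>i\<in>Sm. \<Sum>j\<in>Sp. (transpose A ** A) $ i $ j) = (\<Sum>k\<in>UNIV. r k * (1 - r k))"
    unfolding sum_sum_transpose_matrix_mult compl r_def ..
  have nonneg: "0 \<le> r k" "0 \<le> 1 - r k" for k
    unfolding r_def compl[symmetric, unfolded r_def]
    using row_stochastic_nonneg[OF assms(1)] by (auto intro: sum_nonneg)
  have "(\<Sum>k\<in>UNIV. r k * (1 - r k)) \<noteq> 0"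
    using assms(7) unfolding cross by simp
  then obtain k where k: "r k * (1 - r k) \<noteq> 0"
    by (rule sum.not_neutral_contains_not_neutral)
  have entry_ge: "0 < A $ k $ j \<Longrightarrow> \<eta> \<le> A $ k $ j" for j
    using assms(4) by blast
  have "\<eta> \<le> r k"
    using k unfolding r_def
    by (intro sum_ge_min_positive entry_ge row_stochastic_nonneg[OF assms(1)]) auto
  moreover have "\<eta> \<le> 1 - r k"
    using k unfolding compl[symmetric]
    by (intro sum_ge_min_positive entry_ge row_stochastic_nonneg[OF assms(1)]) auto
  ultimately have "\<eta> / 2 \<le> r k * (1 - r k)"
    using assms(3) by (intro mult_one_minus_ge_half)
  also have "\<dots> \<le> (\<Sum>k\<in>UNIV. r k * (1 - r k))"
    using nonneg by (intro member_le_sum) auto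
  finally show ?thesis
    unfolding cross .
qed

end
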